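(* Let $K\subset\mathbb{R}^n$ be a closed convex set, $y\in\mathbb{R}^n$, $\nu\in K$, and $C\ge 2$ (with $C>2$). For each $m\ge1$ let $\nu_m(y)$ be the output of the Algorithm in the context applied to the bounded convex set $K_m=B(\nu,2^m)\cap K$ with data $y$ (and any starting point in $K_m$). Then all the points $\nu_m(y)$, $m\ge1$, lie in a compact subset of $\mathbb{R}^n$.
   Context: $\|\cdot\|$ is the Euclidean norm, $B(\theta,r)$ the closed Euclidean ball. Algorithm (for a nonempty bounded convex set $L$ with $d=\operatorname{diam}(L)$, constant $C>2$, starting point $\nu_0\in L$): before seeing data, for every $\theta\in L$ and $k\ge1$ fix a maximal (under inclusion) $\frac{d}{2^k(C+1)}$-packing $M_k(\theta)$ of $B(\theta,d/2^{k-1})\cap L$ (distinct points at mutual distance $\ge\frac{d}{2^k(C+1)}$). Given $y$, put $\Upsilon_1=\nu_0$ and $\Upsilon_{k+1}=\arg\min_{\nu\in M_k(\Upsilon_k)}\|y-\nu\|$ (ties: lexicographically least); output $\lim_k\Upsilon_k$ (the sequence is Cauchy). *)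

theory Defs
  imports "HOL-Analysis.Analysis"
begin

text \<open>Points of R^n are vectors real^'n; the index type 'n is finite and
  well-ordered, so that the lexicographic order on coordinates is meaningful.\<close>

definition lex_le :: "real^'n::{finite,wellorder} \<Rightarrow> real^'n::{finite,wellorder} \<Rightarrow> bool" where
  "lex_le x z \<longleftrightarrow> x = z \<or> (\<exists>i. x$i < z$i \<and> (\<forall>j<i. x$j = z$j))"

definition is_packing :: "real \<Rightarrow> 'a::metric_space set \<Rightarrow> bool" where
  "is_packing r P \<longleftrightarrow> (\<forall>x\<in>P. \<forall>z\<in>P. x \<noteq> z \<longrightarrow> r \<le> dist x z)"

definition maximal_packing :: "'a::metric_space set \<Rightarrow> real \<Rightarrow> 'a set \<Rightarrow> bool" where
  "maximal_packing S r P \<longleftrightarrow> P \<subseteq> S \<and> is_packing r P \<and>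
     (\<forall>Q. P \<subseteq> Q \<and> Q \<subseteq> S \<and> is_packing r Q \<longrightarrow> Q = P)"

definition admissible_packings ::
  "'a::real_normed_vector set \<Rightarrow> real \<Rightarrow> (nat \<Rightarrow> 'a \<Rightarrow> 'a set) \<Rightarrow> bool" where
  "admissible_packings L C M \<longleftrightarrow>
     (\<forall>k\<ge>1. \<forall>\<theta>\<in>L. maximal_packing (cball \<theta> (diameter L / 2^(k-1)) \<inter> L)
                                      (diameter L / (2^k * (C+1))) (M k \<theta>))"

definition closest_lex :: "real^'n::{finite,wellorder} \<Rightarrow> (real^'n::{finite,wellorder}) set \<Rightarrow> real^'n::{finite,wellorder}" where
  "closest_lex y P = (THE z. z \<in> P \<and> (\<forall>w\<in>P. norm (y - z) \<le> norm (y - w)) \<and>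
        (\<forall>w\<in>P. norm (y - w) = norm (y - z) \<longrightarrow> lex_le z w))"

text \<open>The iterates: upsilon M nu0 y k = Upsilon_(k+1) of the paper
  (Upsilon_1 = nu0, Upsilon_(k+1) = closest point of M_k(Upsilon_k) to y).\<close>
primrec upsilon :: "(nat \<Rightarrow> real^'n::{finite,wellorder} \<Rightarrow> (real^'n::{finite,wellorder}) set) \<Rightarrow> real^'n::{finite,wellorder}
                    \<Rightarrow> real^'n::{finite,wellorder} \<Rightarrow> nat \<Rightarrow> real^'n::{finite,wellorder}" where
  "upsilon M \<nu>0 y 0 = \<nu>0"
| "upsilon M \<nu>0 y (Suc k) = closest_lex y (M (Suc k) (upsilon M \<nu>0 y k))"

definition alg_output :: "(nat \<Rightarrow> real^'n::{finite,wellorder} \<Rightarrow> (real^'n::{finite,wellorder}) set) \<Rightarrow> real^'n::{finite,wellorder}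
                    \<Rightarrow> real^'n::{finite,wellorder} \<Rightarrow> real^'n::{finite,wellorder}" where
  "alg_output M \<nu>0 y = lim (upsilon M \<nu>0 y)"

end

theory Submission
  imports Defs
begin

text \<open>Write \<open>D = |y - \<nu>|\<close> and \<open>r\<^sub>k = diam L / 2\<^sup>k\<close> for the radius of the \<open>k\<close>-th search
  ball, whose packing has scale \<open>\<delta>\<^sub>k = r\<^sub>k\<^sub>+\<^sub>1 / (C + 1)\<close>. While \<open>\<nu>\<close> lies in the search
  ball around \<open>\<Upsilon>\<^sub>k\<close>, some packing point is \<open>\<delta>\<^sub>k\<close>-close to \<open>\<nu>\<close>, so the point
  \<open>\<Upsilon>\<^sub>k\<^sub>+\<^sub>1\<close> nearest to \<open>y\<close> satisfies \<open>|\<Upsilon>\<^sub>k\<^sub>+\<^sub>1 - \<nu>| \<le> 2D + \<delta>\<^sub>k\<close>. This is at most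
  \<open>r\<^sub>k\<^sub>+\<^sub>1\<close> if \<open>\<delta>\<^sub>k > D\<close> (as \<open>C \<ge> 2\<close>), and at most \<open>3D\<close> otherwise. As the steps
  \<open>|\<Upsilon>\<^sub>j - \<Upsilon>\<^sub>j\<^sub>+\<^sub>1| \<le> r\<^sub>j\<close> add up to at most \<open>2 r\<^sub>k\<close> from step \<open>k\<close> on, the output
  stays within \<open>(2C + 5) D\<close> of \<open>\<nu>\<close>, independently of the diameter of \<open>L\<close>. For
  \<open>L = B(\<nu>, 2\<^sup>m) \<inter> K\<close> all outputs therefore lie in one closed ball.\<close>

lemma lex_le_antisym:
  fixes x z :: "real^'n::{finite,wellorder}"
  assumes "lex_le x z" "lex_le z x"
  shows "x = z"
proof (rule ccontr)
  assume "x \<noteq> z"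
  then obtain i j where i: "x$i < z$i" "\<forall>k<i. x$k = z$k" and j: "z$j < x$j" "\<forall>k<j. z$k = x$k"
    using assms unfolding lex_le_def by blast
  then show False by (metis less_asym linorder_cases)
qed

lemma lex_le_trans:
  fixes x z w :: "real^'n::{finite,wellorder}"
  assumes "lex_le x z" "lex_le z w"
  shows "lex_le x w"
proof (cases "x = z \<or> z = w")
  case True
  then show ?thesis using assms by auto
next
  case False
  then obtain i j where i: "x$i < z$i" "\<forall>k<i. x$k = z$k" and j: "z$j < w$j" "\<forall>k<j. z$k = w$k"
    using assms unfolding lex_le_def by blast
  have "x$(min i j) < w$(min i j) \<and> (\<forall>k<min i j. x$k = w$k)"
    using i j by (cases i j rule: linorder_cases) (auto simp: min_def)
  then show ?thesis unfolding lex_le_def by blast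
qed

lemma lex_le_linear:
  fixes x z :: "real^'n::{finite,wellorder}"
  shows "lex_le x z \<or> lex_le z x"
proof (cases "x = z")
  case True
  then show ?thesis by (simp add: lex_le_def)
next
  case False
  then obtain i0 where "x$i0 \<noteq> z$i0" by (auto simp: vec_eq_iff)
  define i where "i = (LEAST i. x$i \<noteq> z$i)"
  have "x$i \<noteq> z$i" unfolding i_def by (rule LeastI) fact
  moreover have "\<forall>j<i. x$j = z$j" unfolding i_def using not_less_Least by blast
  ultimately show ?thesis unfolding lex_le_def by (metis linorder_neqE_linordered_idom)
qed

lemma finite_has_lex_least:
  fixes Z :: "(real^'n::{finite,wellorder}) set"
  assumes "finite Z" "Z \<noteq> {}"
  obtains z where "z \<in> Z" "\<And>w. w \<in> Z \<Longrightarrow> lex_le z w"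
  using assms
proof (induction Z arbitrary: thesis rule: finite_ne_induct)
  case (singleton x)
  then show ?case by (simp add: lex_le_def)
next
  case (insert x F)
  then obtain m where "m \<in> F" "\<And>w. w \<in> F \<Longrightarrow> lex_le m w" by blast
  then show ?case using insert.prems lex_le_linear lex_le_trans by (metis insert_iff)
qed

lemma closest_lex_nearest:
  fixes Q :: "(real^'n::{finite,wellorder}) set"
  assumes "finite Q" "Q \<noteq> {}"
  shows "closest_lex y Q \<in> Q" and "\<And>w. w \<in> Q \<Longrightarrow> norm (y - closest_lex y Q) \<le> norm (y - w)"
proof -
  define Z where "Z = {z\<in>Q. \<forall>w\<in>Q. norm (y - z) \<le> norm (y - w)}"
  have "finite Z" using assms(1) unfolding Z_def by simp
  moreover have "Z \<noteq> {}"
    using ex_min_if_finite[of "(\<lambda>z. norm (y - z)) ` Q"] assms unfolding Z_def by force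
  ultimately obtain z where z: "z \<in> Z" "\<And>w. w \<in> Z \<Longrightarrow> lex_le z w"
    using finite_has_lex_least by blast
  let ?P = "\<lambda>z. z \<in> Q \<and> (\<forall>w\<in>Q. norm (y - z) \<le> norm (y - w)) \<and>
        (\<forall>w\<in>Q. norm (y - w) = norm (y - z) \<longrightarrow> lex_le z w)"
  have "?P z" using z unfolding Z_def by auto
  moreover have "u = z" if "?P u" for u
    using that \<open>?P z\<close> lex_le_antisym order_antisym by metis
  ultimately have "closest_lex y Q = z" unfolding closest_lex_def by (rule the_equality)
  with \<open>?P z\<close> show "closest_lex y Q \<in> Q" "\<And>w. w \<in> Q \<Longrightarrow> norm (y - closest_lex y Q) \<le> norm (y - w)"
    by auto
qed

lemma maximal_packing_covers:
  assumes P: "maximal_packing S r P" and "x \<in> S" "0 \<le> r"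
  obtains q where "q \<in> P" "dist q x \<le> r"
proof (rule ccontr)
  assume "\<not> thesis"
  with that have far: "\<forall>q\<in>P. r < dist q x" by force
  then have "is_packing r (insert x P)"
    using P unfolding maximal_packing_def is_packing_def by (auto simp: dist_commute)
  with P \<open>x \<in> S\<close> have "insert x P = P" unfolding maximal_packing_def by blast
  with far \<open>0 \<le> r\<close> show False by force
qed

lemma convergent_if_dist_Suc_le_geometric:
  fixes U :: "nat \<Rightarrow> 'a::banach"
  assumes "\<And>k. dist (U k) (U (Suc k)) \<le> d / 2^k"
  shows "convergent U"
proof -
  have "summable (\<lambda>k. d * (1/2)^k)" by (simp add: summable_geometric)
  moreover have "norm (U (Suc k) - U k) \<le> d * (1/2)^k" for k
    using assms[of k] by (simp add: dist_norm norm_minus_commute power_one_over)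
  ultimately have "summable (\<lambda>k. U (Suc k) - U k)"
    by (rule summable_comparison_test'[where N=0])
  then have "(\<lambda>n. U 0 + (\<Sum>k<n. U (Suc k) - U k)) \<longlonglongrightarrow> U 0 + (\<Sum>k. U (Suc k) - U k)"
    by (intro tendsto_add tendsto_const summable_LIMSEQ)
  then show ?thesis by (auto simp: sum_lessThan_telescope convergent_def)
qed

lemma maximal_packing_finite:
  fixes S :: "'a::heine_borel set"
  assumes P: "maximal_packing S r P" and "bounded S" "0 < r"
  shows "finite P"
proof (rule ccontr)
  assume "infinite P"
  moreover have "bounded P" using P \<open>bounded S\<close> bounded_subset unfolding maximal_packing_def by blast
  ultimately obtain x where "x islimpt P" using bounded_infinite_imp_islimpt by blast
  then have "infinite (P \<inter> ball x (r/2))" using \<open>0 < r\<close> by (simp add: islimpt_eq_infinite_ball)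
  then obtain a b where "a \<in> P \<inter> ball x (r/2)" "b \<in> P \<inter> ball x (r/2)" "a \<noteq> b"
    by (metis finite.emptyI finite_insert insertCI subsetI finite_subset)
  moreover have "dist a b < r" using calculation(1,2) by (auto intro: dist_triangle_half_l simp: dist_commute)
  ultimately show False using P unfolding maximal_packing_def is_packing_def by force
qed

locale packing_algorithm =
  fixes L :: "(real^'n::{finite,wellorder}) set"
    and C :: real
    and M :: "nat \<Rightarrow> real^'n::{finite,wellorder} \<Rightarrow> (real^'n::{finite,wellorder}) set"
    and \<nu>0 y :: "real^'n::{finite,wellorder}"
  assumes bounded_L: "bounded L"
    and start: "\<nu>0 \<in> L"
    and C_ge_2: "C \<ge> 2"
    and admissible: "admissible_packings L C M"
begin

abbreviation "d \<equiv> diameter L"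
abbreviation "\<Upsilon> \<equiv> upsilon M \<nu>0 y"

lemma packing_Suc:
  assumes "\<theta> \<in> L"
  shows "maximal_packing (cball \<theta> (d / 2^k) \<inter> L) (d / (2^Suc k * (C+1))) (M (Suc k) \<theta>)"
proof -
  have "1 \<le> Suc k" by simp
  with admissible assms
  have "maximal_packing (cball \<theta> (d / 2^(Suc k - 1)) \<inter> L) (d / (2^Suc k * (C+1))) (M (Suc k) \<theta>)"
    unfolding admissible_packings_def by blast
  then show ?thesis by simp
qed

lemma packing_Suc_finite_nonempty:
  assumes "\<theta> \<in> L"
  shows "finite (M (Suc k) \<theta>)" "M (Suc k) \<theta> \<noteq> {}" "M (Suc k) \<theta> \<subseteq> cball \<theta> (d / 2^k) \<inter> L"
proof -
  note P = packing_Suc[OF assms, of k]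
  have d: "0 \<le> d" using bounded_L by (rule diameter_ge_0)
  show sub: "M (Suc k) \<theta> \<subseteq> cball \<theta> (d / 2^k) \<inter> L"
    using P unfolding maximal_packing_def by blast
  have "\<theta> \<in> cball \<theta> (d / 2^k) \<inter> L" "0 \<le> d / (2^Suc k * (C+1))"
    using assms d C_ge_2 by auto
  then show "M (Suc k) \<theta> \<noteq> {}"
    using maximal_packing_covers[OF P] by blast
  show "finite (M (Suc k) \<theta>)"
  proof (cases "d = 0")
    case True
    then have "M (Suc k) \<theta> \<subseteq> {\<theta>}" using sub by auto
    then show ?thesis by (rule finite_subset) simp
  next
    case False
    then have "0 < d / (2^Suc k * (C+1))" using d C_ge_2 by simp
    moreover have "bounded (cball \<theta> (d / 2^k) \<inter> L)" using bounded_L by (simp add: bounded_Int)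
    ultimately show ?thesis using maximal_packing_finite[OF P] by blast
  qed
qed

lemma upsilon_Suc: "\<Upsilon> (Suc k) = closest_lex y (M (Suc k) (\<Upsilon> k))"
  by simp

lemma upsilon_in_L: "\<Upsilon> k \<in> L"
proof (induction k)
  case 0
  then show ?case using start by simp
next
  case (Suc k)
  then have "\<Upsilon> (Suc k) \<in> M (Suc k) (\<Upsilon> k)"
    unfolding upsilon_Suc by (intro closest_lex_nearest(1) packing_Suc_finite_nonempty)
  then show ?case using packing_Suc_finite_nonempty(3)[OF Suc] by blast
qed

lemma upsilon_Suc_nearest:
  shows "\<Upsilon> (Suc k) \<in> M (Suc k) (\<Upsilon> k)"
    and "\<And>w. w \<in> M (Suc k) (\<Upsilon> k) \<Longrightarrow> norm (y - \<Upsilon> (Suc k)) \<le> norm (y - w)"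
  unfolding upsilon_Suc
  using closest_lex_nearest[OF packing_Suc_finite_nonempty(1,2)[OF upsilon_in_L]] by blast+

lemma dist_upsilon_Suc: "dist (\<Upsilon> k) (\<Upsilon> (Suc k)) \<le> d / 2^k"
proof -
  have "\<Upsilon> (Suc k) \<in> cball (\<Upsilon> k) (d / 2^k)"
    using upsilon_Suc_nearest(1) packing_Suc_finite_nonempty(3)[OF upsilon_in_L] by blast
  then show ?thesis unfolding mem_cball .
qed

lemma convergent_upsilon: "convergent \<Upsilon>"
  using dist_upsilon_Suc by (rule convergent_if_dist_Suc_le_geometric)

lemma dist_upsilon_Suc_if_close:
  assumes "\<nu> \<in> L" "dist (\<Upsilon> k) \<nu> \<le> d / 2^k"
  shows "dist (\<Upsilon> (Suc k)) \<nu> \<le> 2 * dist y \<nu> + d / (2^Suc k * (C+1))"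
proof -
  let ?\<delta> = "d / (2^Suc k * (C+1))"
  have "0 \<le> ?\<delta>" using C_ge_2 diameter_ge_0[OF bounded_L] by simp
  with assms obtain q where q: "q \<in> M (Suc k) (\<Upsilon> k)" "dist q \<nu> \<le> ?\<delta>"
    using maximal_packing_covers[OF packing_Suc[OF upsilon_in_L]] by (metis IntI mem_cball)
  have "dist (\<Upsilon> (Suc k)) \<nu> \<le> dist y (\<Upsilon> (Suc k)) + dist y \<nu>"
    by (rule dist_triangle3)
  also have "dist y (\<Upsilon> (Suc k)) \<le> dist y q"
    using upsilon_Suc_nearest(2)[OF q(1)] by (simp add: dist_norm)
  also have "dist y q \<le> dist y \<nu> + dist q \<nu>"
    by (rule dist_triangle2)
  finally show ?thesis using q(2) by simp
qed

lemma upsilon_close_or_slack: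
  assumes "\<nu> \<in> L"
  shows "dist (\<Upsilon> k) \<nu> \<le> d / 2^k \<or> dist (\<Upsilon> k) \<nu> + 2 * (d / 2^k) \<le> (2*C+5) * dist y \<nu>"
proof (induction k)
  case 0
  show ?case using diameter_bounded_bound[OF bounded_L start assms] by simp
next
  case (Suc k)
  let ?D = "dist y \<nu>" and ?\<delta> = "d / (2^Suc k * (C+1))"
  have "C + 1 \<noteq> 0" using C_ge_2 by simp
  then have r_Suc: "d / 2^Suc k = (C+1) * ?\<delta>" by simp
  show ?case
  proof (cases "dist (\<Upsilon> k) \<nu> \<le> d / 2^k")
    case True
    note close = dist_upsilon_Suc_if_close[OF assms True]
    show ?thesis
    proof (cases "?\<delta> \<le> ?D")
      case True
      then have "(C+1) * ?\<delta> \<le> (C+1) * ?D" using C_ge_2 by (intro mult_left_mono) auto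
      moreover have "(2*C+5) * ?D = 3 * ?D + 2 * ((C+1) * ?D)" by algebra
      ultimately show ?thesis using close True r_Suc by linarith
    next
      case False
      have "2 * ?\<delta> \<le> C * ?\<delta>" using C_ge_2 diameter_ge_0[OF bounded_L] by (intro mult_right_mono) auto
      moreover have "(C+1) * ?\<delta> = C * ?\<delta> + ?\<delta>" by algebra
      ultimately show ?thesis using close False r_Suc by linarith
    qed
  next
    case False
    then have "dist (\<Upsilon> k) \<nu> + 2 * (d / 2^k) \<le> (2*C+5) * ?D" using Suc by linarith
    moreover have "dist (\<Upsilon> (Suc k)) \<nu> \<le> dist (\<Upsilon> k) (\<Upsilon> (Suc k)) + dist (\<Upsilon> k) \<nu>"
      by (rule dist_triangle3)
    moreover have "d / 2^k = 2 * (d / 2^Suc k)" by simp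
    ultimately show ?thesis using dist_upsilon_Suc[of k] by linarith
  qed
qed

lemma dist_alg_output:
  assumes "\<nu> \<in> L"
  shows "dist (alg_output M \<nu>0 y) \<nu> \<le> (2*C+5) * dist y \<nu>"
proof -
  let ?E = "(2*C+5) * dist y \<nu>"
  have bound: "dist (\<Upsilon> k) \<nu> \<le> ?E + d / 2^k" for k
  proof -
    have "0 \<le> ?E" "0 \<le> d / 2^k" using C_ge_2 diameter_ge_0[OF bounded_L] by auto
    then show ?thesis using upsilon_close_or_slack[OF assms, of k] by linarith
  qed
  have "(\<lambda>k. dist (\<Upsilon> k) \<nu>) \<longlonglongrightarrow> dist (alg_output M \<nu>0 y) \<nu>"
    using convergent_upsilon unfolding alg_output_def convergent_LIMSEQ_iff by (intro tendsto_intros)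
  moreover have "(\<lambda>k. ?E + d / 2^k) \<longlonglongrightarrow> ?E"
    using tendsto_add[OF tendsto_const LIMSEQ_divide_realpow_zero[of 2 d]] by simp
  ultimately show ?thesis using bound by (intro LIMSEQ_le) auto
qed

end

theorem mainTheorem16:
  fixes K :: "(real^'n::{finite,wellorder}) set"
    and y \<nu> :: "real^'n::{finite,wellorder}"
    and C :: real
    and M :: "nat \<Rightarrow> nat \<Rightarrow> real^'n::{finite,wellorder} \<Rightarrow> (real^'n::{finite,wellorder}) set"
    and s :: "nat \<Rightarrow> real^'n::{finite,wellorder}"
  assumes "closed K" and "convex K" and "\<nu> \<in> K"
    and "C \<ge> 2" and "C > 2"
    and "\<And>m. m \<ge> 1 \<Longrightarrow> admissible_packings (cball \<nu> (2^m) \<inter> K) C (M m)"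
    and "\<And>m. m \<ge> 1 \<Longrightarrow> s m \<in> cball \<nu> (2^m) \<inter> K"
  shows "\<exists>S. compact S \<and> (\<forall>m\<ge>1. alg_output (M m) (s m) y \<in> S)"
proof (intro exI conjI allI impI)
  show "compact (cball \<nu> ((2*C+5) * dist y \<nu>))" by simp
  fix m :: nat
  assume "1 \<le> m"
  then interpret packing_algorithm "cball \<nu> (2^m) \<inter> K" C "M m" "s m" y
    using assms by unfold_locales (auto simp: bounded_Int)
  have "dist (alg_output (M m) (s m) y) \<nu> \<le> (2*C+5) * dist y \<nu>"
    using \<open>\<nu> \<in> K\<close> by (intro dist_alg_output) simp
  then show "alg_output (M m) (s m) y \<in> cball \<nu> ((2*C+5) * dist y \<nu>)"
    by (simp add: dist_commute)
qed

end
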